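(* Let $(X,d,\kappa)$ be a digital metric space where $d$ is an $\ell_p$ metric for some $1\le p\le\infty$, let $\phi\in\Phi$, and let $T:X\to X$ be a digital $\phi$-contraction. Suppose $\phi(d(x,y))<1$ for all $x,y\in X$. Then $T$ is a constant function.
   Context: A digital metric space is a triple $(X,d,\kappa)$ where $X\subset\mathbb{Z}^n$ for some positive integer $n$, $\kappa$ is an adjacency relation on $X$, and $d$ is a metric on $X$. The $\ell_p$ metric on $\mathbb{Z}^n$ is $d(x,y)=(\sum_i|x_i-y_i|^p)^{1/p}$ for $1\le p<\infty$ and $\max_i|x_i-y_i|$ for $p=\infty$. $\Phi$ is the set of functions $\phi:[0,\infty)\to[0,\infty)$ that are increasing, satisfy $\phi(t)=0$ iff $t=0$, and $\phi(t)<t$ for $t>0$. $T$ is a digital $\phi$-contraction if $d(T(x),T(y))\le\phi(d(x,y))$ for all $x,y\in X$. *)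

theory Defs
  imports "HOL-Analysis.Analysis" "HOL-Library.Extended_Real"
begin

text \<open>Points of Z^n are modelled as int ^ 'n (dimension = CARD('n) >= 1).
  The exponent p ranges over [1, \<infinity>], modelled as an extended real.\<close>

definition lp_dist :: "ereal \<Rightarrow> int ^ 'n \<Rightarrow> int ^ 'n \<Rightarrow> real" where
  "lp_dist p x y =
     (if p = \<infinity> then Max (range (\<lambda>i. real_of_int \<bar>x $ i - y $ i\<bar>))
      else (\<Sum>i\<in>UNIV. real_of_int \<bar>x $ i - y $ i\<bar> powr real_of_ereal p)
             powr (1 / real_of_ereal p))"

definition Phi_fun :: "(real \<Rightarrow> real) \<Rightarrow> bool" where
  "Phi_fun \<phi> \<longleftrightarrow>
     (\<forall>t\<ge>0. \<phi> t \<ge> 0) \<and>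
     mono_on {0..} \<phi> \<and>
     (\<forall>t\<ge>0. \<phi> t = 0 \<longleftrightarrow> t = 0) \<and>
     (\<forall>t>0. \<phi> t < t)"

definition digital_phi_contraction ::
  "('a \<Rightarrow> 'a \<Rightarrow> real) \<Rightarrow> 'a set \<Rightarrow> (real \<Rightarrow> real) \<Rightarrow> ('a \<Rightarrow> 'a) \<Rightarrow> bool" where
  "digital_phi_contraction d X \<phi> T \<longleftrightarrow>
     (\<forall>x\<in>X. \<forall>y\<in>X. d (T x) (T y) \<le> \<phi> (d x y))"

end

theory Submission
  imports Defs
begin

text \<open>Distinct points of \<open>\<int>\<^sup>n\<close> are at \<open>\<ell>\<^sub>p\<close>-distance at least 1, so
  \<open>d(Tx,Ty) \<le> \<phi>(d(x,y)) < 1\<close> forces \<open>Tx = Ty\<close>.\<close>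

lemma lp_dist_ge_1:
  fixes u v :: "int ^ 'n"
  assumes p: "0 < p" and ne: "u \<noteq> v"
  shows "1 \<le> lp_dist p u v"
proof -
  obtain i where "u $ i \<noteq> v $ i" using ne by (metis vec_eq_iff)
  then have coord: "1 \<le> real_of_int \<bar>u $ i - v $ i\<bar>" by simp
  show ?thesis
  proof (cases "p = \<infinity>")
    case True
    have "real_of_int \<bar>u $ i - v $ i\<bar> \<le> Max (range (\<lambda>j. real_of_int \<bar>u $ j - v $ j\<bar>))"
      by (rule Max_ge) auto
    with coord have "1 \<le> Max (range (\<lambda>j. real_of_int \<bar>u $ j - v $ j\<bar>))"
      by linarith
    with True show ?thesis unfolding lp_dist_def by simp
  next
    case False
    define q where "q = real_of_ereal p"
    have "0 < q" using p False unfolding q_def by (cases p) auto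
    have "1 \<le> real_of_int \<bar>u $ i - v $ i\<bar> powr q"
      using coord \<open>0 < q\<close> by (simp add: ge_one_powr_ge_zero)
    also have "\<dots> \<le> (\<Sum>j\<in>UNIV. real_of_int \<bar>u $ j - v $ j\<bar> powr q)"
      by (rule member_le_sum) auto
    finally have "1 \<le> (\<Sum>j\<in>UNIV. real_of_int \<bar>u $ j - v $ j\<bar> powr q) powr (1 / q)"
      using \<open>0 < q\<close> by (simp add: ge_one_powr_ge_zero)
    with False show ?thesis by (simp add: lp_dist_def q_def)
  qed
qed

lemma digital_phi_contraction_constant_if_separated:
  assumes separated: "\<And>u v. u \<noteq> v \<Longrightarrow> 1 \<le> d u v"
    and contr: "digital_phi_contraction d X \<phi> T"
    and small: "\<forall>x\<in>X. \<forall>y\<in>X. \<phi> (d x y) < 1"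
    and "x \<in> X" "y \<in> X"
  shows "T x = T y"
proof -
  have "d (T x) (T y) < 1"
    using contr small \<open>x \<in> X\<close> \<open>y \<in> X\<close> unfolding digital_phi_contraction_def
    by (meson le_less_trans)
  then show ?thesis by (meson not_le separated)
qed

theorem proposition7p3:
  fixes X :: "(int ^ 'n) set"
    and \<kappa> :: "int ^ 'n \<Rightarrow> int ^ 'n \<Rightarrow> bool"
    and p :: ereal
    and \<phi> :: "real \<Rightarrow> real"
    and T :: "int ^ 'n \<Rightarrow> int ^ 'n"
  assumes p: "1 \<le> p"
    and phi: "Phi_fun \<phi>"
    and TX: "\<forall>x\<in>X. T x \<in> X"
    and contr: "digital_phi_contraction (lp_dist p) X \<phi> T"
    and small: "\<forall>x\<in>X. \<forall>y\<in>X. \<phi> (lp_dist p x y) < 1"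
  shows "\<forall>x\<in>X. \<forall>y\<in>X. T x = T y"
proof -
  have "0 < p" using less_le_trans[OF ereal_0_less_1 p] .
  then have "\<And>u v :: int ^ 'n. u \<noteq> v \<Longrightarrow> 1 \<le> lp_dist p u v"
    by (rule lp_dist_ge_1)
  from digital_phi_contraction_constant_if_separated[OF this contr small]
  show ?thesis by blast
qed

end
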